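(* Let $\Sigma=\{(x,y)\in\mathbb{R}^2_+ : x+y=1\}$. Let $S\subset\mathbb{R}^2_+\setminus\{(0,0)\}$ be a connected set such that, for some $R>0$, $S\cap\{(0,y) : y\in(0,R)\}\neq\emptyset$ and $S\cap\{(x,0) : x\in(0,R)\}\neq\emptyset$. Let $\pi:S\to\Sigma$ be the projection along positive rays, $\pi(x,y)=\big(\tfrac{x}{x+y},\tfrac{y}{x+y}\big)$, and let $G:S\to\Sigma$ be continuous. Then the multivalued map $H=\pi^{-1}\circ G:S\multimap S$ (where $\pi^{-1}(z)=\{s\in S:\pi(s)=z\}$) has at least one fixed point, i.e. there exists $s\in S$ with $s\in\pi^{-1}(G(s))$, equivalently $\pi(s)=G(s)$.
   Context: $\mathbb{R}^2_+$ denotes the closed positive quadrant $\{(x,y):x\ge0,\,y\ge0\}$. *)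

theory Defs
  imports "HOL-Analysis.Analysis"
begin

definition quadrant :: "(real \<times> real) set" where
  "quadrant = {(x, y). x \<ge> 0 \<and> y \<ge> 0}"

definition simplex2 :: "(real \<times> real) set" where
  "simplex2 = {(x, y). x \<ge> 0 \<and> y \<ge> 0 \<and> x + y = 1}"

definition ray_proj :: "real \<times> real \<Rightarrow> real \<times> real" where
  "ray_proj p = (fst p / (fst p + snd p), snd p / (fst p + snd p))"

definition ray_preimage :: "(real \<times> real) set \<Rightarrow> real \<times> real \<Rightarrow> (real \<times> real) set" where
  "ray_preimage S z = {s \<in> S. ray_proj s = z}"

end

theory Submission
  imports Defs
begin

(* The fixed-point problem pi(s) = G(s) is one-dimensional: both pi(s) and G(s)
   lie on the segment x + y = 1, so they coincide as soon as their first
   coordinates agree.  Hence it suffices to find a zero of the continuous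
   real function  f(s) = x/(x+y) - fst (G s)  on S.  At a point (0,y) of S
   the function f is <= 0, at a point (x,0) of S it is >= 0, and f(S) is a
   connected subset of the reals, so f vanishes somewhere on S. *)

lemma connected_continuous_zero:
  fixes f :: "'a::topological_space \<Rightarrow> real"
  assumes "connected S" and "continuous_on S f"
    and "a \<in> S" and "b \<in> S" and "f a \<le> 0" and "0 \<le> f b"
  shows "\<exists>s\<in>S. f s = 0"
proof -
  have "connected (f ` S)"
    using connected_continuous_image[OF assms(2,1)] .
  then have "{f a..f b} \<subseteq> f ` S"
    using assms(3,4) by (intro connected_contains_Icc) auto
  then show ?thesis
    using assms(5,6) by force
qed

lemma quadrant_coord_sum_pos:
  assumes "p \<in> quadrant - {(0, 0)}"
  shows "fst p + snd p > 0"
  using assms by (cases p) (auto simp: quadrant_def)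

lemma ray_proj_eq_simplex2_iff:
  assumes "fst p + snd p > 0" and "z \<in> simplex2"
  shows "ray_proj p = z \<longleftrightarrow> fst p / (fst p + snd p) = fst z"
proof -
  have "snd p / (fst p + snd p) = 1 - fst p / (fst p + snd p)"
    using assms(1) by (simp add: field_simps)
  moreover have "snd z = 1 - fst z"
    using assms(2) by (auto simp: simplex2_def)
  ultimately show ?thesis
    by (cases z) (auto simp: ray_proj_def)
qed

theorem lemma2p1:
  fixes S :: "(real \<times> real) set" and G :: "real \<times> real \<Rightarrow> real \<times> real" and R :: real
  assumes "S \<subseteq> quadrant - {(0, 0)}"
    and "connected S"
    and "R > 0"
    and "S \<inter> {(0, y) | y. y \<in> {0<..<R}} \<noteq> {}"
    and "S \<inter> {(x, 0) | x. x \<in> {0<..<R}} \<noteq> {}"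
    and "continuous_on S G"
    and "G ` S \<subseteq> simplex2"
  shows "\<exists>s\<in>S. s \<in> ray_preimage S (G s)"
proof -
  have pos: "fst s + snd s > 0" if "s \<in> S" for s
    using assms(1) that by (intro quadrant_coord_sum_pos) auto
  have G_simplex: "G s \<in> simplex2" if "s \<in> S" for s
    using assms(7) that by auto
  define f where "f s = fst s / (fst s + snd s) - fst (G s)" for s
  have "continuous_on S f"
    unfolding f_def using pos
    by (intro continuous_intros continuous_on_fst[OF assms(6)]) force
  moreover obtain y where y: "(0, y) \<in> S" using assms(4) by auto
  moreover obtain x where x: "(x, 0) \<in> S" using assms(5) by auto
  moreover have "f (0, y) \<le> 0" "0 \<le> f (x, 0)"
    using G_simplex[OF y] G_simplex[OF x] pos[OF x]
    by (auto simp: f_def simplex2_def split: prod.splits)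
  ultimately obtain s where s: "s \<in> S" "f s = 0"
    using connected_continuous_zero[OF assms(2)] by blast
  then have "ray_proj s = G s"
    using ray_proj_eq_simplex2_iff[OF pos G_simplex] by (simp add: f_def)
  then show ?thesis
    using s(1) by (auto simp: ray_preimage_def)
qed

end
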